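(* Consider the extreme Reissner–Nordström case $a=0$, $Q\neq0$, $M=\rho=|Q|$. Then for every half-integer $k$ and all $m>0$, $e\in\mathbb{R}$, there is no energy eigenvalue $\omega\in\mathbb{R}$; i.e., bound state solutions of the Dirac equation (of the separated form considered) do not exist in the extreme Reissner–Nordström geometry.
   Context: Fix real numbers $M>0$, $a$, $Q$ with $M^2=a^2+Q^2$ and put $\rho:=M$. Fix the rest mass $m>0$ and charge $e\in\mathbb{R}$ of a Dirac particle and a half-integer $k\in\{\pm\frac12,\pm\frac32,\dots\}$. For $\omega,\lambda\in\mathbb{R}$ consider the radial system for $f:(\rho,\infty)\to\mathbb{C}^2$, $$\begin{pmatrix}(r-\rho)\frac{d}{dr}+\frac{iV(r)}{r-\rho} & imr-\lambda\\ -imr-\lambda & (r-\rho)\frac{d}{dr}-\frac{iV(r)}{r-\rho}\end{pmatrix}f(r)=0,\qquad V(r):=\omega(r^2+a^2)+ka+eQr,$$ and the angular system for $g:(0,\pi)\to\mathbb{C}^2$, $$\begin{pmatrix}\frac{d}{d\theta}+\frac{\cot\theta}{2}-W(\theta) & -am\cos\theta+\lambda\\ am\cos\theta+\lambda & -\frac{d}{d\theta}-\frac{\cot\theta}{2}-W(\theta)\end{pmatrix}g(\theta)=0,\qquad W(\theta):=a\omega\sin\theta+\frac{k}{\sin\theta}.$$ A number $\omega\in\mathbb{R}$ is called an energy eigenvalue (for azimuthal quantum number $k$) if there exist $\lambda\in\mathbb{R}$ and nontrivial solutions $f$ of the radial system and $g$ of the angular system with $$\int_\rho^\infty|f(r)|^2\frac{r^2+a^2}{(r-\rho)^2}\,dr<\infty,\qquad\int_0^\pi|g(\theta)|^2\sin\theta\,d\theta<\infty.$$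 *)

theory Defs
  imports "HOL-Analysis.Analysis"
begin

definition half_integer :: "real \<Rightarrow> bool" where
  "half_integer k \<longleftrightarrow> (\<exists>n::int. k = real_of_int n + 1/2)"

definition radV :: "real \<Rightarrow> real \<Rightarrow> real \<Rightarrow> real \<Rightarrow> real \<Rightarrow> real \<Rightarrow> real" where
  "radV a Q e k \<omega> r = \<omega> * (r\<^sup>2 + a\<^sup>2) + k * a + e * Q * r"

definition angW :: "real \<Rightarrow> real \<Rightarrow> real \<Rightarrow> real \<Rightarrow> real" where
  "angW a k \<omega> \<theta> = a * \<omega> * sin \<theta> + k / sin \<theta>"

text \<open>Classical solution of the radial system on (rho, infinity), rho = M;
  f = (f1, f2).\<close>
definition radial_solution ::
  "real \<Rightarrow> real \<Rightarrow> real \<Rightarrow> real \<Rightarrow> real \<Rightarrow> real \<Rightarrow> real \<Rightarrow> real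
   \<Rightarrow> (real \<Rightarrow> complex) \<Rightarrow> (real \<Rightarrow> complex) \<Rightarrow> bool" where
  "radial_solution M a Q m e k \<omega> lam f1 f2 \<longleftrightarrow>
     (\<forall>r. M < r \<longrightarrow> (\<exists>d1 d2.
        (f1 has_vector_derivative d1) (at r) \<and> (f2 has_vector_derivative d2) (at r) \<and>
        of_real (r - M) * d1 + \<i> * of_real (radV a Q e k \<omega> r / (r - M)) * f1 r
          + (\<i> * of_real (m * r) - of_real lam) * f2 r = 0 \<and>
        (- \<i> * of_real (m * r) - of_real lam) * f1 r + of_real (r - M) * d2
          - \<i> * of_real (radV a Q e k \<omega> r / (r - M)) * f2 r = 0))"

definition angular_solution ::
  "real \<Rightarrow> real \<Rightarrow> real \<Rightarrow> real \<Rightarrow> real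
   \<Rightarrow> (real \<Rightarrow> complex) \<Rightarrow> (real \<Rightarrow> complex) \<Rightarrow> bool" where
  "angular_solution a m k \<omega> lam g1 g2 \<longleftrightarrow>
     (\<forall>\<theta>. 0 < \<theta> \<and> \<theta> < pi \<longrightarrow> (\<exists>d1 d2.
        (g1 has_vector_derivative d1) (at \<theta>) \<and> (g2 has_vector_derivative d2) (at \<theta>) \<and>
        d1 + of_real (cot \<theta> / 2 - angW a k \<omega> \<theta>) * g1 \<theta>
          + of_real (- a * m * cos \<theta> + lam) * g2 \<theta> = 0 \<and>
        of_real (a * m * cos \<theta> + lam) * g1 \<theta> - d2
          - of_real (cot \<theta> / 2 + angW a k \<omega> \<theta>) * g2 \<theta> = 0))"

definition energy_eigenvalue ::
  "real \<Rightarrow> real \<Rightarrow> real \<Rightarrow> real \<Rightarrow> real \<Rightarrow> real \<Rightarrow> real \<Rightarrow> bool" where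
  "energy_eigenvalue M a Q m e k \<omega> \<longleftrightarrow>
     (\<exists>lam::real. \<exists>f1 f2 g1 g2.
        radial_solution M a Q m e k \<omega> lam f1 f2 \<and>
        (\<exists>r. M < r \<and> (f1 r \<noteq> 0 \<or> f2 r \<noteq> 0)) \<and>
        angular_solution a m k \<omega> lam g1 g2 \<and>
        (\<exists>\<theta>. 0 < \<theta> \<and> \<theta> < pi \<and> (g1 \<theta> \<noteq> 0 \<or> g2 \<theta> \<noteq> 0)) \<and>
        (\<lambda>r. ((cmod (f1 r))\<^sup>2 + (cmod (f2 r))\<^sup>2) * (r\<^sup>2 + a\<^sup>2) / (r - M)\<^sup>2)
          integrable_on {M<..} \<and>
        (\<lambda>\<theta>. ((cmod (g1 \<theta>))\<^sup>2 + (cmod (g2 \<theta>))\<^sup>2) * sin \<theta>)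
          integrable_on {0<..<pi})"

end

theory Submission
  imports Defs
begin

(*
  For a = 0 the radial system is singular only at the double horizon r = M.  The densities
  N1 = |f1|^2, N2 = |f2|^2 and the cross term u + i v = cnj f1 * f2 obey a closed linear
  system.  N1 - N2 is conserved, so normalisability forces N1 = N2, and then |u|, |v| <= N1.
  Normalisability also excludes a positive lower bound for N1 at infinity and a bound
  N1 >= c (r - M) near the horizon, while a Gronwall argument shows that N1 vanishes
  nowhere unless it vanishes identically.

  If omega M + e Q = 0 and |omega| <= m, then v is monotone, hence zero, and N1 is a power
  of r - M.  If omega M + e Q = 0 and |omega| > m, the function N1 + (m/omega) u -
  (lam/(omega r)) v is comparable to N1 and almost increasing at infinity.  If
  omega M + e Q <> 0, a correction N1 + p u - q v with p, q vanishing at the horizon is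
  comparable to N1 and has bounded logarithmic derivative there.
*)

lemma not_integrable_on_Ioi_if_ge_const:
  fixes g :: "real \<Rightarrow> real"
  assumes g_nonneg: "\<And>x. M < x \<Longrightarrow> 0 \<le> g x"
    and "M < X" and c: "0 < c" and g_ge: "\<And>x. X \<le> x \<Longrightarrow> c \<le> g x"
  shows "\<not> g integrable_on {M<..}"
proof
  assume int: "g integrable_on {M<..}"
  define I where "I = integral {M<..} g"
  define Y where "Y = X + (\<bar>I\<bar> + 1) / c"
  have "X \<le> Y" using c by (simp add: Y_def)
  have sub: "{X..Y} \<subseteq> {M<..}" using \<open>M < X\<close> by auto
  have int_XY: "g integrable_on {X..Y}" using integrable_on_subinterval[OF int sub] .
  have "\<bar>I\<bar> + 1 = integral {X..Y} (\<lambda>_. c)"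
    using \<open>X \<le> Y\<close> c by (simp add: Y_def)
  also have "\<dots> \<le> integral {X..Y} g"
    using int_XY g_ge by (intro integral_le) auto
  also have "\<dots> \<le> I"
    unfolding I_def using sub int_XY int g_nonneg by (intro integral_subset_le) auto
  finally show False by linarith
qed

lemma not_integrable_on_Ioi_if_ge_inverse:
  fixes g :: "real \<Rightarrow> real"
  assumes g_nonneg: "\<And>x. M < x \<Longrightarrow> 0 \<le> g x"
    and d: "0 < d" and c: "0 < c" and g_ge: "\<And>x. M < x \<Longrightarrow> x < M + d \<Longrightarrow> c / (x - M) \<le> g x"
  shows "\<not> g integrable_on {M<..}"
proof
  assume int: "g integrable_on {M<..}"
  define I where "I = integral {M<..} g"
  define \<epsilon> where "\<epsilon> = d / 2 * exp (- ((\<bar>I\<bar> + 1) / c))"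
  let ?a = "M + \<epsilon>" and ?b = "M + d / 2"
  have "0 < \<epsilon>" using d by (simp add: \<epsilon>_def)
  have "\<epsilon> < d / 2" using d c by (simp add: \<epsilon>_def)
  have sub: "{?a..?b} \<subseteq> {M<..}" using \<open>0 < \<epsilon>\<close> by auto
  have int_ab: "g integrable_on {?a..?b}" using integrable_on_subinterval[OF int sub] .
  have log_deriv: "((\<lambda>x. c * ln (x - M)) has_vector_derivative c / (x - M)) (at x within {?a..?b})"
    if "x \<in> {?a..?b}" for x
    using that \<open>0 < \<epsilon>\<close>
    by (auto intro!: derivative_eq_intros simp: has_real_derivative_iff_has_vector_derivative[symmetric])
  have "((\<lambda>x. c / (x - M)) has_integral (c * ln (d / 2) - c * ln \<epsilon>)) {?a..?b}"
    using fundamental_theorem_of_calculus[of ?a ?b, OF _ log_deriv] \<open>\<epsilon> < d / 2\<close> by simp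
  moreover have "ln \<epsilon> = ln (d / 2) - (\<bar>I\<bar> + 1) / c"
    unfolding \<epsilon>_def using d by (subst ln_mult) auto
  then have "c * ln (d / 2) - c * ln \<epsilon> = \<bar>I\<bar> + 1"
    using c by (simp add: field_simps)
  ultimately have "\<bar>I\<bar> + 1 = integral {?a..?b} (\<lambda>x. c / (x - M))"
    by (simp add: integral_unique)
  also have "\<dots> \<le> integral {?a..?b} g"
    using int_ab g_ge \<open>0 < \<epsilon>\<close> \<open>\<epsilon> < d / 2\<close> d
    by (intro integral_le has_integral_integrable[OF \<open>(_ has_integral _) _\<close>]) auto
  also have "\<dots> \<le> I"
    unfolding I_def using sub int_ab int g_nonneg by (intro integral_subset_le) auto
  finally show False by linarith
qed

lemma exp_weighted_nondecreasing:
  fixes h h' G G' :: "real \<Rightarrow> real"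
  assumes "a \<le> b"
    and h: "\<And>x. a \<le> x \<Longrightarrow> x \<le> b \<Longrightarrow> (h has_real_derivative h' x) (at x)"
    and G: "\<And>x. a \<le> x \<Longrightarrow> x \<le> b \<Longrightarrow> (G has_real_derivative G' x) (at x)"
    and nonneg: "\<And>x. a \<le> x \<Longrightarrow> x \<le> b \<Longrightarrow> 0 \<le> h' x + G' x * h x"
  shows "h a * exp (G a) \<le> h b * exp (G b)"
proof (rule DERIV_nonneg_imp_nondecreasing[OF \<open>a \<le> b\<close>])
  fix x assume "a \<le> x" "x \<le> b"
  then have "((\<lambda>x. h x * exp (G x)) has_real_derivative exp (G x) * (h' x + G' x * h x)) (at x)"
    using h G by (auto intro!: derivative_eq_intros simp: algebra_simps)
  moreover have "0 \<le> exp (G x) * (h' x + G' x * h x)"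
    using nonneg \<open>a \<le> x\<close> \<open>x \<le> b\<close> by simp
  ultimately show "\<exists>y. ((\<lambda>x. h x * exp (G x)) has_real_derivative y) (at x) \<and> 0 \<le> y"
    by blast
qed

lemma gronwall_two_sided:
  fixes h h' :: "real \<Rightarrow> real"
  assumes "a \<le> b"
    and h: "\<And>x. a \<le> x \<Longrightarrow> x \<le> b \<Longrightarrow> (h has_real_derivative h' x) (at x)"
    and bound: "\<And>x. a \<le> x \<Longrightarrow> x \<le> b \<Longrightarrow> \<bar>h' x\<bar> \<le> K * h x"
  shows "h a * exp (- K * (b - a)) \<le> h b" and "h b * exp (- K * (b - a)) \<le> h a"
proof -
  have lower: "0 \<le> h' x + K * h x" and upper: "0 \<le> - h' x + K * h x" if "a \<le> x" "x \<le> b" for x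
    using bound[OF that] by (simp_all add: abs_le_iff)
  have "h a * exp (K * a) \<le> h b * exp (K * b)"
    using lower
    by (intro exp_weighted_nondecreasing[OF \<open>a \<le> b\<close> h, where G = "\<lambda>x. K * x" and G' = "\<lambda>_. K"])
       (auto intro!: derivative_eq_intros simp: ac_simps)
  then show "h a * exp (- K * (b - a)) \<le> h b"
    by (simp add: algebra_simps exp_diff mult_exp_exp pos_divide_le_eq)
  have "- h a * exp (- K * a) \<le> - h b * exp (- K * b)"
    using h upper
    by (intro exp_weighted_nondecreasing[OF \<open>a \<le> b\<close>, where h = "\<lambda>x. - h x" and h' = "\<lambda>x. - h' x"
          and G = "\<lambda>x. - K * x" and G' = "\<lambda>_. - K"])
       (auto intro!: derivative_eq_intros)
  then have "h b * exp (- K * b) * exp (K * a) \<le> h a * exp (- K * a) * exp (K * a)"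
    by (simp add: mult_right_mono)
  then show "h b * exp (- K * (b - a)) \<le> h a"
    by (simp add: algebra_simps flip: exp_add)
qed

lemma DERIV_homogeneous_eq_powr:
  fixes h :: "real \<Rightarrow> real"
  assumes deriv: "\<And>x. M < x \<Longrightarrow> (h has_real_derivative p * h x / (x - M)) (at x)"
    and "M < r" "M < x"
  shows "h x = h r / (r - M) powr p * (x - M) powr p"
proof -
  have "((\<lambda>x. h x * (x - M) powr (- p)) has_real_derivative 0) (at x within {M<..})" if "M < x" for x
  proof -
    have "((\<lambda>x. h x * (x - M) powr (- p)) has_real_derivative
        p * h x / (x - M) * (x - M) powr (- p) + h x * (- p * (x - M) powr (- p - 1) * 1)) (at x)"
      using that by (auto intro!: derivative_eq_intros deriv)
    moreover have "(x - M) powr (- p - 1) = (x - M) powr (- p) / (x - M)"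
      using that by (simp add: powr_diff)
    ultimately show ?thesis
      by (simp add: has_field_derivative_at_within)
  qed
  then obtain c where c: "\<And>x. M < x \<Longrightarrow> h x * (x - M) powr (- p) = c"
    using has_field_derivative_zero_constant[of "{M<..}" "\<lambda>x. h x * (x - M) powr (- p)"] by auto
  show ?thesis
    using c[OF \<open>M < r\<close>] c[OF \<open>M < x\<close>] \<open>M < r\<close> \<open>M < x\<close>
    by (auto simp: powr_minus field_simps)
qed

lemma has_real_derivative_cmod_power2:
  assumes "(f has_vector_derivative d) (at x)"
  shows "((\<lambda>x. (cmod (f x))\<^sup>2) has_real_derivative 2 * Re (cnj (f x) * d)) (at x)"
proof -
  have "(\<lambda>x. (cmod (f x))\<^sup>2) = (\<lambda>x. Re (cnj (f x) * f x))"
    by (simp add: cmod_power2) (simp add: power2_eq_square)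
  moreover have "((\<lambda>x. Re (cnj (f x) * f x)) has_real_derivative Re (cnj (f x) * d + cnj d * f x)) (at x)"
    using assms by (auto intro!: derivative_eq_intros)
  ultimately show ?thesis
    by (simp add: algebra_simps)
qed

lemma radial_solution_quadratic_derivatives:
  fixes f1 f2 :: "real \<Rightarrow> complex"
  assumes sol: "radial_solution M a Q m e k \<omega> lam f1 f2" and r: "M < r"
  defines "S \<equiv> radV a Q e k \<omega> r / (r - M)" and "w \<equiv> \<lambda>x. cnj (f1 x) * f2 x"
    and "N \<equiv> (cmod (f1 r))\<^sup>2 + (cmod (f2 r))\<^sup>2"
  shows "((\<lambda>x. (cmod (f1 x))\<^sup>2) has_real_derivative 2 * (m * r * Im (w r) + lam * Re (w r)) / (r - M)) (at r)"
    and "((\<lambda>x. (cmod (f2 x))\<^sup>2) has_real_derivative 2 * (m * r * Im (w r) + lam * Re (w r)) / (r - M)) (at r)"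
    and "((\<lambda>x. Re (w x)) has_real_derivative (lam * N - 2 * S * Im (w r)) / (r - M)) (at r)"
    and "((\<lambda>x. Im (w x)) has_real_derivative (2 * S * Re (w r) + m * r * N) / (r - M)) (at r)"
proof -
  obtain d1 d2 where D: "(f1 has_vector_derivative d1) (at r)" "(f2 has_vector_derivative d2) (at r)"
    and E1: "of_real (r - M) * d1 + \<i> * of_real S * f1 r + (\<i> * of_real (m * r) - of_real lam) * f2 r = 0"
    and E2: "(- \<i> * of_real (m * r) - of_real lam) * f1 r + of_real (r - M) * d2 - \<i> * of_real S * f2 r = 0"
    using sol r unfolding radial_solution_def S_def by blast
  have rM: "r - M \<noteq> 0" using r by simp
  have d1: "of_real (r - M) * d1 = - (\<i> * S * f1 r + (\<i> * (m * r) - lam) * f2 r)"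
    using E1 by (simp add: algebra_simps add_eq_0_iff)
  have d2: "of_real (r - M) * d2 = (\<i> * (m * r) + lam) * f1 r + \<i> * S * f2 r"
    using E2 by (simp add: algebra_simps add_eq_0_iff)
  have "2 * Re (cnj (f1 r) * d1) * (r - M) = 2 * Re (cnj (f1 r) * (of_real (r - M) * d1))"
    by (simp add: algebra_simps)
  then have "2 * Re (cnj (f1 r) * d1) = 2 * (m * r * Im (w r) + lam * Re (w r)) / (r - M)"
    unfolding d1 w_def using rM by (simp add: nonzero_eq_divide_eq algebra_simps)
  then show "((\<lambda>x. (cmod (f1 x))\<^sup>2) has_real_derivative 2 * (m * r * Im (w r) + lam * Re (w r)) / (r - M)) (at r)"
    using has_real_derivative_cmod_power2[OF D(1)] by simp
  have "2 * Re (cnj (f2 r) * d2) * (r - M) = 2 * Re (cnj (f2 r) * (of_real (r - M) * d2))"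
    by (simp add: algebra_simps)
  then have "2 * Re (cnj (f2 r) * d2) = 2 * (m * r * Im (w r) + lam * Re (w r)) / (r - M)"
    unfolding d2 w_def using rM by (simp add: nonzero_eq_divide_eq algebra_simps)
  then show "((\<lambda>x. (cmod (f2 x))\<^sup>2) has_real_derivative 2 * (m * r * Im (w r) + lam * Re (w r)) / (r - M)) (at r)"
    using has_real_derivative_cmod_power2[OF D(2)] by simp
  have Dw: "(w has_vector_derivative cnj (f1 r) * d2 + cnj d1 * f2 r) (at r)"
    unfolding w_def using D by (auto intro!: derivative_eq_intros)
  have "of_real (r - M) * (cnj (f1 r) * d2 + cnj d1 * f2 r)
      = cnj (f1 r) * (of_real (r - M) * d2) + cnj (of_real (r - M) * d1) * f2 r"
    by (simp add: algebra_simps)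
  also have "\<dots> = 2 * \<i> * S * w r + (\<i> * (m * r) + lam) * N"
    unfolding d1 d2 w_def N_def cmod_power2 by (simp add: complex_eq_iff algebra_simps power2_eq_square)
  finally have "cnj (f1 r) * d2 + cnj d1 * f2 r = (2 * \<i> * S * w r + (\<i> * (m * r) + lam) * N) / (r - M)"
    using rM by (simp add: nonzero_eq_divide_eq ac_simps)
  then show "((\<lambda>x. Re (w x)) has_real_derivative (lam * N - 2 * S * Im (w r)) / (r - M)) (at r)"
    and "((\<lambda>x. Im (w x)) has_real_derivative (2 * S * Re (w r) + m * r * N) / (r - M)) (at r)"
    using has_field_derivative_Re[OF Dw] has_field_derivative_Im[OF Dw] by simp_all
qed

locale extreme_RN_radial_solution =
  fixes M Q m e k \<omega> lam :: real and f1 f2 :: "real \<Rightarrow> complex"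
  assumes radial: "radial_solution M 0 Q m e k \<omega> lam f1 f2"
    and M_pos: "0 < M" and m_pos: "0 < m"
    and finite_norm:
      "(\<lambda>r. ((cmod (f1 r))\<^sup>2 + (cmod (f2 r))\<^sup>2) * r\<^sup>2 / (r - M)\<^sup>2) integrable_on {M<..}"
begin

definition N1 :: "real \<Rightarrow> real" where "N1 r = (cmod (f1 r))\<^sup>2"
definition N2 :: "real \<Rightarrow> real" where "N2 r = (cmod (f2 r))\<^sup>2"
definition u :: "real \<Rightarrow> real" where "u r = Re (cnj (f1 r) * f2 r)"
definition v :: "real \<Rightarrow> real" where "v r = Im (cnj (f1 r) * f2 r)"
definition V :: "real \<Rightarrow> real" where "V r = \<omega> * r\<^sup>2 + e * Q * r"

lemma N1_nonneg [simp]: "0 \<le> N1 r" and N2_nonneg [simp]: "0 \<le> N2 r"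
  by (simp_all add: N1_def N2_def)

lemma u_sq_plus_v_sq: "(u r)\<^sup>2 + (v r)\<^sup>2 = N1 r * N2 r"
proof -
  have "(u r)\<^sup>2 + (v r)\<^sup>2 = (cmod (cnj (f1 r) * f2 r))\<^sup>2"
    by (simp add: u_def v_def cmod_power2)
  then show ?thesis
    by (simp add: N1_def N2_def norm_mult power_mult_distrib)
qed

lemma radV_eq_V: "radV 0 Q e k \<omega> r = V r"
  by (simp add: radV_def V_def)

lemma N1_deriv:
  "M < x \<Longrightarrow> (N1 has_real_derivative 2 * (m * x * v x + lam * u x) / (x - M)) (at x)"
  using radial_solution_quadratic_derivatives(1)[OF radial] by (simp add: N1_def[abs_def] u_def v_def)

lemma N2_deriv:
  "M < x \<Longrightarrow> (N2 has_real_derivative 2 * (m * x * v x + lam * u x) / (x - M)) (at x)"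
  using radial_solution_quadratic_derivatives(2)[OF radial] by (simp add: N2_def[abs_def] u_def v_def)

lemma weighted_density_integrable:
  "(\<lambda>r. (N1 r + N2 r) * r\<^sup>2 / (r - M)\<^sup>2) integrable_on {M<..}"
  using finite_norm by (simp add: N1_def N2_def)

lemma density_not_bounded_below_at_top:
  assumes "0 < c"
  shows "\<exists>x\<ge>X. N1 x + N2 x < c"
proof (rule ccontr)
  assume "\<not> ?thesis"
  then have ge_c: "c \<le> N1 x + N2 x" if "X \<le> x" for x
    using that by (auto simp: not_less)
  have "\<not> (\<lambda>r. (N1 r + N2 r) * r\<^sup>2 / (r - M)\<^sup>2) integrable_on {M<..}"
  proof (rule not_integrable_on_Ioi_if_ge_const[of M _ "max X (M + 1)" c])
    fix x assume "max X (M + 1) \<le> x"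
    then have "M < x" "X \<le> x" by auto
    have "N1 x + N2 x = (N1 x + N2 x) * (x - M)\<^sup>2 / (x - M)\<^sup>2"
      using \<open>M < x\<close> by simp
    also have "\<dots> \<le> (N1 x + N2 x) * x\<^sup>2 / (x - M)\<^sup>2"
      using \<open>M < x\<close> M_pos by (intro divide_right_mono mult_left_mono power_mono) auto
    finally show "c \<le> (N1 x + N2 x) * x\<^sup>2 / (x - M)\<^sup>2"
      using ge_c[OF \<open>X \<le> x\<close>] by linarith
  qed (use \<open>0 < c\<close> in auto)
  then show False
    using weighted_density_integrable by contradiction
qed

lemma density_not_bounded_below_near_horizon:
  assumes "0 < c" "0 < d"
  shows "\<exists>x. M < x \<and> x < M + d \<and> N1 x + N2 x < c * (x - M)"
proof (rule ccontr)
  assume "\<not> ?thesis"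
  then have ge_c: "c * (x - M) \<le> N1 x + N2 x" if "M < x" "x < M + d" for x
    using that by (meson not_less)
  have "\<not> (\<lambda>r. (N1 r + N2 r) * r\<^sup>2 / (r - M)\<^sup>2) integrable_on {M<..}"
  proof (rule not_integrable_on_Ioi_if_ge_inverse[of M _ d "c * M\<^sup>2"])
    fix x assume "M < x" "x < M + d"
    have "c * M\<^sup>2 / (x - M) = c * (x - M) * M\<^sup>2 / (x - M)\<^sup>2"
      using \<open>M < x\<close> by (simp add: power2_eq_square)
    also have "\<dots> \<le> (N1 x + N2 x) * x\<^sup>2 / (x - M)\<^sup>2"
      using ge_c[OF \<open>M < x\<close> \<open>x < M + d\<close>] \<open>M < x\<close> M_pos
      by (intro divide_right_mono mult_mono power_mono) auto
    finally show "c * M\<^sup>2 / (x - M) \<le> (N1 x + N2 x) * x\<^sup>2 / (x - M)\<^sup>2" .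
  qed (use assms M_pos in auto)
  then show False
    using weighted_density_integrable by contradiction
qed

lemma N2_eq_N1:
  assumes "M < x"
  shows "N2 x = N1 x"
proof -
  obtain C where C: "\<And>x. x \<in> {M<..} \<Longrightarrow> N1 x - N2 x = C"
    using has_field_derivative_zero_constant[of "{M<..}" "\<lambda>x. N1 x - N2 x"]
      DERIV_diff[OF N1_deriv N2_deriv]
    by (force simp: at_within_open[of _ "{M<..}"])
  have "C = 0"
  proof (rule ccontr)
    assume "C \<noteq> 0"
    then obtain y where "M + 1 \<le> y" "N1 y + N2 y < \<bar>C\<bar>"
      using density_not_bounded_below_at_top[of "\<bar>C\<bar>" "M + 1"] by auto
    moreover have "N1 y - N2 y = C"
      using C \<open>M + 1 \<le> y\<close> by simp
    ultimately show False
      using N1_nonneg[of y] N2_nonneg[of y] by linarith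
  qed
  then show ?thesis
    using C[of x] assms by simp
qed

lemma abs_u_le: "M < x \<Longrightarrow> \<bar>u x\<bar> \<le> N1 x"
  and abs_v_le: "M < x \<Longrightarrow> \<bar>v x\<bar> \<le> N1 x"
proof -
  assume "M < x"
  then have sum: "(u x)\<^sup>2 + (v x)\<^sup>2 = (N1 x)\<^sup>2"
    using u_sq_plus_v_sq[of x] N2_eq_N1[of x] by (simp add: power2_eq_square)
  have "(u x)\<^sup>2 \<le> (N1 x)\<^sup>2" and "(v x)\<^sup>2 \<le> (N1 x)\<^sup>2"
    using sum zero_le_power2[of "u x"] zero_le_power2[of "v x"] by linarith+
  then show "\<bar>u x\<bar> \<le> N1 x" and "\<bar>v x\<bar> \<le> N1 x"
    by (simp_all add: abs_le_square_iff[symmetric])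
qed

lemma u_deriv:
  assumes "M < x"
  shows "(u has_real_derivative 2 * (lam * N1 x - V x / (x - M) * v x) / (x - M)) (at x)"
  using radial_solution_quadratic_derivatives(3)[OF radial assms] N2_eq_N1[OF assms]
  by (simp add: N1_def N2_def u_def[abs_def] v_def radV_eq_V algebra_simps)

lemma v_deriv:
  assumes "M < x"
  shows "(v has_real_derivative 2 * (V x / (x - M) * u x + m * x * N1 x) / (x - M)) (at x)"
  using radial_solution_quadratic_derivatives(4)[OF radial assms] N2_eq_N1[OF assms]
  by (simp add: N1_def N2_def u_def v_def[abs_def] radV_eq_V algebra_simps)

lemma N1_deriv_bound:
  assumes "M < s" "s \<le> x" "x \<le> t"
  shows "\<bar>2 * (m * x * v x + lam * u x) / (x - M)\<bar> \<le> 2 * (m * t + \<bar>lam\<bar>) / (s - M) * N1 x"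
proof -
  have "M < x" using assms by simp
  have "\<bar>m * x * v x + lam * u x\<bar> \<le> m * t * N1 x + \<bar>lam\<bar> * N1 x"
    using abs_v_le[OF \<open>M < x\<close>] abs_u_le[OF \<open>M < x\<close>] assms M_pos m_pos
    by (intro order.trans[OF abs_triangle_ineq] add_mono)
       (auto simp: abs_mult intro!: mult_mono)
  also have "\<dots> = (m * t + \<bar>lam\<bar>) * N1 x"
    by (simp add: algebra_simps)
  finally have num: "\<bar>m * x * v x + lam * u x\<bar> \<le> (m * t + \<bar>lam\<bar>) * N1 x" .
  have "\<bar>2 * (m * x * v x + lam * u x) / (x - M)\<bar> = 2 * \<bar>m * x * v x + lam * u x\<bar> / (x - M)"
    using \<open>M < x\<close> by (simp only: abs_divide abs_mult abs_numeral)
  also have "\<dots> \<le> 2 * ((m * t + \<bar>lam\<bar>) * N1 x) / (s - M)"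
    using num assms M_pos m_pos by (intro frac_le) auto
  also have "\<dots> = 2 * (m * t + \<bar>lam\<bar>) / (s - M) * N1 x"
    by simp
  finally show ?thesis .
qed

lemma N1_pos_propagates:
  assumes "M < a" "M < b" "0 < N1 a"
  shows "0 < N1 b"
proof -
  have pos_iff: "0 < N1 s \<longleftrightarrow> 0 < N1 t" if "M < s" "s \<le> t" for s t
  proof -
    define K where "K = 2 * (m * t + \<bar>lam\<bar>) / (s - M)"
    have "N1 s * exp (- K * (t - s)) \<le> N1 t" "N1 t * exp (- K * (t - s)) \<le> N1 s"
      using gronwall_two_sided[OF \<open>s \<le> t\<close>, of N1, OF N1_deriv N1_deriv_bound[OF \<open>M < s\<close>]] that
      unfolding K_def by auto
    then show ?thesis
      using N1_nonneg[of s] N1_nonneg[of t] by (smt (verit) exp_gt_zero mult_pos_pos)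
  qed
  show ?thesis
    using pos_iff[of a b] pos_iff[of b a] assms by (cases "a \<le> b") auto
qed

(* A frequency is critical when V vanishes at the horizon, i.e. omega M + e Q = 0. *)
lemma V_div_if_critical:
  assumes "\<omega> * M + e * Q = 0" "M < x"
  shows "V x / (x - M) = \<omega> * x"
proof -
  have "e * Q = - \<omega> * M"
    using assms(1) by linarith
  then have "V x = \<omega> * x * (x - M)"
    by (simp add: V_def power2_eq_square algebra_simps)
  then show ?thesis
    using assms(2) by simp
qed

lemma v_deriv_if_critical:
  assumes "\<omega> * M + e * Q = 0" "M < x"
  shows "(v has_real_derivative 2 * x * (\<omega> * u x + m * N1 x) / (x - M)) (at x)"
  using v_deriv[OF \<open>M < x\<close>] V_div_if_critical[OF assms] by (simp add: algebra_simps)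

lemma v_mono_if_critical_le:
  assumes crit: "\<omega> * M + e * Q = 0" and "\<bar>\<omega>\<bar> \<le> m" and "M < y" "y \<le> z"
  shows "v y \<le> v z"
proof (rule DERIV_nonneg_imp_nondecreasing[OF \<open>y \<le> z\<close>])
  fix t assume "y \<le> t" "t \<le> z"
  with \<open>M < y\<close> have "M < t" by simp
  have "\<bar>\<omega> * u t\<bar> \<le> m * N1 t"
    using abs_u_le[OF \<open>M < t\<close>] \<open>\<bar>\<omega>\<bar> \<le> m\<close> by (simp add: abs_mult mult_mono)
  then have "0 \<le> 2 * t * (\<omega> * u t + m * N1 t) / (t - M)"
    using \<open>M < t\<close> M_pos by simp
  then show "\<exists>d. (v has_real_derivative d) (at t) \<and> 0 \<le> d"
    using v_deriv_if_critical[OF crit \<open>M < t\<close>] by blast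
qed

lemma v_vanishes_if_critical_le:
  assumes crit: "\<omega> * M + e * Q = 0" and "\<bar>\<omega>\<bar> \<le> m" and "M < x"
  shows "v x = 0"
proof (rule ccontr)
  note mono = v_mono_if_critical_le[OF crit \<open>\<bar>\<omega>\<bar> \<le> m\<close>]
  assume "v x \<noteq> 0"
  then consider "0 < v x" | "v x < 0" by linarith
  then show False
  proof cases
    case 1
    then obtain y where "x \<le> y" "N1 y + N2 y < v x"
      using density_not_bounded_below_at_top by blast
    moreover have "v x \<le> v y" "v y \<le> N1 y"
      using mono[OF \<open>M < x\<close> \<open>x \<le> y\<close>] abs_v_le[of y] \<open>M < x\<close> \<open>x \<le> y\<close> by auto
    ultimately show False
      using N2_nonneg[of y] by linarith
  next
    case 2
    then have "0 < - v x / (x - M)"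
      using \<open>M < x\<close> by (simp add: divide_neg_pos)
    then obtain y where y: "M < y" "y < x" "N1 y + N2 y < - v x / (x - M) * (y - M)"
      using density_not_bounded_below_near_horizon[OF \<open>0 < - v x / (x - M)\<close>, of "x - M"] \<open>M < x\<close>
      by auto
    have "(y - M) / (x - M) \<le> 1"
      using y by simp
    then have "- v x * ((y - M) / (x - M)) \<le> - v x * 1"
      using 2 by (intro mult_left_mono) auto
    then have "- v x / (x - M) * (y - M) \<le> - v x"
      by simp
    moreover have "v y \<le> v x" "- v y \<le> N1 y"
      using mono[of y x] abs_v_le[of y] y by auto
    ultimately show False
      using y N2_nonneg[of y] by linarith
  qed
qed

lemma balance_if_critical_le:
  assumes crit: "\<omega> * M + e * Q = 0" and "\<bar>\<omega>\<bar> \<le> m" and "M < x"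
  shows "\<omega> * u x + m * N1 x = 0"
proof -
  have "2 * x * (\<omega> * u x + m * N1 x) / (x - M) = 0"
  proof (rule DERIV_local_const[OF v_deriv_if_critical[OF crit \<open>M < x\<close>]])
    show "0 < x - M" using \<open>M < x\<close> by simp
    show "\<forall>y. \<bar>x - y\<bar> < x - M \<longrightarrow> v x = v y"
      using v_vanishes_if_critical_le[OF crit \<open>\<bar>\<omega>\<bar> \<le> m\<close>] \<open>M < x\<close> by (auto simp: abs_less_iff)
  qed
  then show ?thesis
    using \<open>M < x\<close> M_pos by simp
qed

lemma N1_vanishes_if_homogeneous:
  assumes hom: "\<And>x. M < x \<Longrightarrow> (N1 has_real_derivative p * N1 x / (x - M)) (at x)"
    and "M < r"
  shows "N1 r = 0"
proof (rule ccontr)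
  assume "N1 r \<noteq> 0"
  define c where "c = N1 r / (r - M) powr p"
  have "0 < N1 r"
    using N1_nonneg[of r] \<open>N1 r \<noteq> 0\<close> by linarith
  then have "0 < c"
    using \<open>M < r\<close> by (simp add: c_def)
  have N1_eq: "N1 x = c * (x - M) powr p" if "M < x" for x
    using DERIV_homogeneous_eq_powr[OF hom \<open>M < r\<close> that] by (simp add: c_def)
  show False
  proof (cases "p \<le> 1")
    case True
    obtain y where "M < y" "y < M + 1" and small: "N1 y + N2 y < c * (y - M)"
      using density_not_bounded_below_near_horizon[OF \<open>0 < c\<close>, of 1] by auto
    have "(y - M) powr 1 \<le> (y - M) powr p"
      using True \<open>M < y\<close> \<open>y < M + 1\<close> by (intro powr_mono') auto
    then have "c * (y - M) \<le> N1 y"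
      using N1_eq[OF \<open>M < y\<close>] \<open>0 < c\<close> \<open>M < y\<close> by simp
    then show False
      using small N2_nonneg[of y] by linarith
  next
    case False
    obtain y where "M + 1 \<le> y" and small: "N1 y + N2 y < c"
      using density_not_bounded_below_at_top[OF \<open>0 < c\<close>] by blast
    have "1 \<le> (y - M) powr p"
      using False \<open>M + 1 \<le> y\<close> by (intro ge_one_powr_ge_zero) auto
    then have "c \<le> N1 y"
      using N1_eq[of y] \<open>0 < c\<close> \<open>M + 1 \<le> y\<close> by simp
    then show False
      using small N2_nonneg[of y] by linarith
  qed
qed

lemma N1_vanishes_if_critical_le:
  assumes crit: "\<omega> * M + e * Q = 0" and "\<bar>\<omega>\<bar> \<le> m" and "M < r"
  shows "N1 r = 0"
proof (cases "\<bar>\<omega>\<bar> < m")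
  case True
  have "m * N1 r = - (\<omega> * u r)"
    using balance_if_critical_le[OF assms] by linarith
  also have "\<dots> \<le> \<bar>\<omega>\<bar> * N1 r"
    using abs_u_le[OF \<open>M < r\<close>] abs_ge_minus_self[of "\<omega> * u r"]
    by (simp add: abs_mult) (meson abs_ge_zero mult_left_mono order_trans)
  finally have "(m - \<bar>\<omega>\<bar>) * N1 r \<le> 0"
    by (simp add: algebra_simps)
  then show ?thesis
    using True N1_nonneg[of r] by (simp add: mult_le_0_iff)
next
  case False
  then have "\<omega> \<noteq> 0" "\<bar>\<omega>\<bar> = m"
    using \<open>\<bar>\<omega>\<bar> \<le> m\<close> m_pos by auto
  have "(N1 has_real_derivative (- 2 * lam * m / \<omega>) * N1 x / (x - M)) (at x)" if "M < x" for x
  proof -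
    have "u x = - m * N1 x / \<omega>"
      using balance_if_critical_le[OF crit \<open>\<bar>\<omega>\<bar> \<le> m\<close> that] \<open>\<omega> \<noteq> 0\<close> by (simp add: field_simps)
    then show ?thesis
      using N1_deriv[OF that] v_vanishes_if_critical_le[OF crit \<open>\<bar>\<omega>\<bar> \<le> m\<close> that] by (simp add: mult.assoc)
  qed
  then show ?thesis
    using N1_vanishes_if_homogeneous \<open>M < r\<close> by blast
qed

lemma u_deriv_if_critical:
  assumes "\<omega> * M + e * Q = 0" "M < x"
  shows "(u has_real_derivative 2 * (lam * N1 x - \<omega> * x * v x) / (x - M)) (at x)"
  using u_deriv[OF \<open>M < x\<close>] V_div_if_critical[OF assms] by simp

(* The corrections cancel the non-decaying part of the derivative of N1; what is left is
   O(N1 / x^2). *)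
lemma far_correction_deriv:
  assumes crit: "\<omega> * M + e * Q = 0" and "\<omega> \<noteq> 0" and "M < x"
  shows "((\<lambda>x. N1 x + m / \<omega> * u x - lam / (\<omega> * x) * v x)
    has_real_derivative lam * v x / (\<omega> * x\<^sup>2)) (at x)"
proof -
  have "x \<noteq> 0" "x - M \<noteq> 0"
    using \<open>M < x\<close> M_pos by auto
  have "((\<lambda>x. lam / (\<omega> * x)) has_real_derivative - lam / (\<omega> * x\<^sup>2)) (at x)"
    using \<open>x \<noteq> 0\<close> \<open>\<omega> \<noteq> 0\<close> by (auto intro!: derivative_eq_intros simp: power2_eq_square)
  then have deriv: "((\<lambda>x. N1 x + m / \<omega> * u x - lam / (\<omega> * x) * v x) has_real_derivative
      2 * (m * x * v x + lam * u x) / (x - M) + m / \<omega> * (2 * (lam * N1 x - \<omega> * x * v x) / (x - M))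
      - (- lam / (\<omega> * x\<^sup>2) * v x + 2 * x * (\<omega> * u x + m * N1 x) / (x - M) * (lam / (\<omega> * x)))) (at x)"
    by (intro DERIV_diff DERIV_add DERIV_cmult DERIV_mult N1_deriv[OF \<open>M < x\<close>]
        u_deriv_if_critical[OF crit \<open>M < x\<close>] v_deriv_if_critical[OF crit \<open>M < x\<close>])
  have identity: "2 * (m * x * v x + lam * u x) / D + m / \<omega> * (2 * (lam * N1 x - \<omega> * x * v x) / D)
      - (- lam / (\<omega> * x\<^sup>2) * v x + 2 * x * (\<omega> * u x + m * N1 x) / D * (lam / (\<omega> * x)))
      = lam * v x / (\<omega> * x\<^sup>2)" if "D \<noteq> 0" for D
    using that \<open>x \<noteq> 0\<close> \<open>\<omega> \<noteq> 0\<close> by (simp add: field_simps power2_eq_square)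
  show ?thesis
    using deriv by (simp only: identity[OF \<open>x - M \<noteq> 0\<close>])
qed

lemma N1_vanishes_if_comparable_at_top:
  assumes "M < X" and "0 < \<delta>" and "0 \<le> C"
    and deriv: "\<And>x. X \<le> x \<Longrightarrow> (\<Phi> has_real_derivative \<Phi>' x) (at x)"
    and growth: "\<And>x. X \<le> x \<Longrightarrow> - (C / x\<^sup>2 * \<Phi> x) \<le> \<Phi>' x"
    and comparable: "\<And>x. X \<le> x \<Longrightarrow> \<delta> * N1 x \<le> \<Phi> x \<and> \<Phi> x \<le> 2 * N1 x"
    and "M < r"
  shows "N1 r = 0"
proof (rule ccontr)
  assume "N1 r \<noteq> 0"
  then have "0 < N1 r"
    using N1_nonneg[of r] by linarith
  have grow: "\<Phi> X * exp (- C / X) \<le> \<Phi> y * exp (- C / y)" if "X \<le> y" for y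
  proof (rule exp_weighted_nondecreasing[OF that deriv])
    fix x assume "X \<le> x" "x \<le> y"
    then have "0 < x"
      using \<open>M < X\<close> M_pos by simp
    then show "((\<lambda>x. - C / x) has_real_derivative C / x\<^sup>2) (at x)"
      by (auto intro!: derivative_eq_intros simp: power2_eq_square)
    show "0 \<le> \<Phi>' x + C / x\<^sup>2 * \<Phi> x"
      using growth[OF \<open>X \<le> x\<close>] by simp
  qed
  define c where "c = \<Phi> X * exp (- C / X) / 2"
  have "0 < \<delta> * N1 X"
    using N1_pos_propagates[OF \<open>M < r\<close> \<open>M < X\<close> \<open>0 < N1 r\<close>] \<open>0 < \<delta>\<close> by simp
  then have "0 < c"
    using comparable[of X] by (simp add: c_def)
  then obtain y where "X \<le> y" "N1 y + N2 y < c"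
    using density_not_bounded_below_at_top by blast
  have "0 \<le> \<delta> * N1 y"
    using \<open>0 < \<delta>\<close> by simp
  then have "0 \<le> \<Phi> y"
    using comparable[OF \<open>X \<le> y\<close>] by linarith
  moreover have "exp (- C / y) \<le> 1"
    using \<open>0 \<le> C\<close> \<open>X \<le> y\<close> \<open>M < X\<close> M_pos by simp
  ultimately have "\<Phi> y * exp (- C / y) \<le> \<Phi> y"
    by (rule mult_left_le[rotated])
  then have "2 * c \<le> \<Phi> y"
    using grow[OF \<open>X \<le> y\<close>] unfolding c_def by linarith
  then show False
    using comparable[OF \<open>X \<le> y\<close>] \<open>N1 y + N2 y < c\<close> N2_nonneg[of y] by linarith
qed

lemma far_correction_comparable:
  assumes "m < \<bar>\<omega>\<bar>" and "M < x" and "2 * \<bar>lam\<bar> / (\<bar>\<omega>\<bar> - m) < x"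
  defines "\<delta> \<equiv> (\<bar>\<omega>\<bar> - m) / (2 * \<bar>\<omega>\<bar>)"
  shows "\<delta> * N1 x \<le> N1 x + m / \<omega> * u x - lam / (\<omega> * x) * v x
    \<and> N1 x + m / \<omega> * u x - lam / (\<omega> * x) * v x \<le> 2 * N1 x"
proof -
  have "0 < \<delta>" "m / \<bar>\<omega>\<bar> = 1 - 2 * \<delta>"
    using \<open>m < \<bar>\<omega>\<bar>\<close> m_pos by (simp_all add: \<delta>_def field_simps)
  have "\<bar>m / \<omega> * u x\<bar> = m / \<bar>\<omega>\<bar> * \<bar>u x\<bar>"
    using m_pos by (simp add: abs_mult)
  also have "\<dots> \<le> m / \<bar>\<omega>\<bar> * N1 x"
    using abs_u_le[OF \<open>M < x\<close>] m_pos by (intro mult_left_mono) auto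
  finally have u_term: "\<bar>m / \<omega> * u x\<bar> \<le> (1 - 2 * \<delta>) * N1 x"
    using \<open>m / \<bar>\<omega>\<bar> = 1 - 2 * \<delta>\<close> by simp
  have "2 * \<bar>lam\<bar> < x * (\<bar>\<omega>\<bar> - m)"
    using assms(1,3) by (simp add: pos_divide_less_eq)
  moreover have "\<delta> * (\<bar>\<omega>\<bar> * x) = x * (\<bar>\<omega>\<bar> - m) / 2"
    using \<open>m < \<bar>\<omega>\<bar>\<close> m_pos unfolding \<delta>_def by (simp add: field_simps)
  ultimately have "\<bar>lam\<bar> \<le> \<delta> * (\<bar>\<omega>\<bar> * x)"
    by linarith
  then have "\<bar>lam / (\<omega> * x)\<bar> \<le> \<delta>"
    using \<open>M < x\<close> M_pos \<open>m < \<bar>\<omega>\<bar>\<close> m_pos by (simp add: abs_mult divide_le_eq)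
  then have v_term: "\<bar>lam / (\<omega> * x) * v x\<bar> \<le> \<delta> * N1 x"
    unfolding abs_mult[of _ "v x"] using abs_v_le[OF \<open>M < x\<close>] \<open>0 < \<delta>\<close> by (intro mult_mono) auto
  have "0 \<le> \<delta> * N1 x" "(1 - 2 * \<delta>) * N1 x = N1 x - 2 * (\<delta> * N1 x)"
    using \<open>0 < \<delta>\<close> by (simp_all add: algebra_simps)
  then show ?thesis
    using u_term v_term unfolding abs_le_iff by linarith
qed

lemma N1_vanishes_if_critical_gt:
  assumes crit: "\<omega> * M + e * Q = 0" and "m < \<bar>\<omega>\<bar>" and "M < r"
  shows "N1 r = 0"
proof -
  have "\<omega> \<noteq> 0"
    using assms m_pos by auto
  define \<delta> where "\<delta> = (\<bar>\<omega>\<bar> - m) / (2 * \<bar>\<omega>\<bar>)"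
  define C where "C = 2 * \<bar>lam\<bar> / (\<bar>\<omega>\<bar> - m)"
  define X where "X = max r (C + 1)"
  define \<Phi> where "\<Phi> x = N1 x + m / \<omega> * u x - lam / (\<omega> * x) * v x" for x
  have "0 < \<delta>" "0 \<le> C" "M < X"
    using \<open>m < \<bar>\<omega>\<bar>\<close> m_pos \<open>M < r\<close> by (auto simp: \<delta>_def C_def X_def)
  have comparable: "\<delta> * N1 x \<le> \<Phi> x \<and> \<Phi> x \<le> 2 * N1 x" if "X \<le> x" for x
    using far_correction_comparable[OF \<open>m < \<bar>\<omega>\<bar>\<close>, of x] that \<open>M < X\<close>
    unfolding \<Phi>_def \<delta>_def C_def X_def by auto
  show ?thesis
  proof (rule N1_vanishes_if_comparable_at_top[OF \<open>M < X\<close> \<open>0 < \<delta>\<close> \<open>0 \<le> C\<close> _ _ comparable \<open>M < r\<close>])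
    fix x assume "X \<le> x"
    then have "M < x"
      using \<open>M < X\<close> by simp
    show "(\<Phi> has_real_derivative lam * v x / (\<omega> * x\<^sup>2)) (at x)"
      unfolding \<Phi>_def[abs_def] by (rule far_correction_deriv[OF crit \<open>\<omega> \<noteq> 0\<close> \<open>M < x\<close>])
    have "\<bar>lam * v x / \<omega>\<bar> = \<bar>lam\<bar> / \<bar>\<omega>\<bar> * \<bar>v x\<bar>"
      by (simp add: abs_mult)
    also have "\<dots> \<le> \<bar>lam\<bar> / \<bar>\<omega>\<bar> * N1 x"
      using abs_v_le[OF \<open>M < x\<close>] by (intro mult_left_mono) auto
    also have "\<dots> = C * (\<delta> * N1 x)"
      using \<open>m < \<bar>\<omega>\<bar>\<close> m_pos by (simp add: C_def \<delta>_def field_simps)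
    also have "\<dots> \<le> C * \<Phi> x"
      using comparable[OF \<open>X \<le> x\<close>] \<open>0 \<le> C\<close> by (simp add: mult_left_mono)
    finally have "- (lam * v x / \<omega>) \<le> C * \<Phi> x"
      by (rule abs_le_D2)
    then have "- (C * \<Phi> x) \<le> lam * v x / \<omega>"
      by linarith
    then have "- (C * \<Phi> x) / x\<^sup>2 \<le> lam * v x / \<omega> / x\<^sup>2"
      by (rule divide_right_mono) simp
    then show "- (C / x\<^sup>2 * \<Phi> x) \<le> lam * v x / (\<omega> * x\<^sup>2)"
      by simp
  qed
qed

lemma N1_vanishes_if_comparable_near_horizon:
  assumes "M < x1"
    and deriv: "\<And>x. M < x \<Longrightarrow> x \<le> x1 \<Longrightarrow> (\<Phi> has_real_derivative \<Phi>' x) (at x)"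
    and growth: "\<And>x. M < x \<Longrightarrow> x \<le> x1 \<Longrightarrow> \<bar>\<Phi>' x\<bar> \<le> K * \<Phi> x"
    and comparable: "\<And>x. M < x \<Longrightarrow> x \<le> x1 \<Longrightarrow> N1 x / 2 \<le> \<Phi> x \<and> \<Phi> x \<le> 2 * N1 x"
    and "M < r"
  shows "N1 r = 0"
proof (rule ccontr)
  assume "N1 r \<noteq> 0"
  then have "0 < N1 r"
    using N1_nonneg[of r] by linarith
  define x2 where "x2 = min r x1"
  have "M < x2" "x2 \<le> x1"
    using \<open>M < r\<close> \<open>M < x1\<close> by (auto simp: x2_def)
  have "0 < \<Phi> x2"
    using comparable[OF \<open>M < x2\<close> \<open>x2 \<le> x1\<close>] N1_pos_propagates[OF \<open>M < r\<close> \<open>M < x2\<close> \<open>0 < N1 r\<close>]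
    by linarith
  have "0 \<le> K * \<Phi> x2"
    using growth[OF \<open>M < x2\<close> \<open>x2 \<le> x1\<close>] by linarith
  then have "0 \<le> K"
    using \<open>0 < \<Phi> x2\<close> by (simp add: zero_le_mult_iff)
  define c where "c = \<Phi> x2 * exp (- K * (x2 - M)) / (2 * (x2 - M))"
  have "0 < c"
    using \<open>0 < \<Phi> x2\<close> \<open>M < x2\<close> by (simp add: c_def)
  then obtain y where "M < y" "y < x2" and small: "N1 y + N2 y < c * (y - M)"
    using density_not_bounded_below_near_horizon[of c "x2 - M"] \<open>M < x2\<close> by auto
  have "c * (y - M) \<le> c * (x2 - M)"
    using \<open>0 < c\<close> \<open>y < x2\<close> by simp
  also have "\<dots> = \<Phi> x2 * exp (- K * (x2 - M)) / 2"
    using \<open>M < x2\<close> by (simp add: c_def field_simps)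
  also have "\<dots> \<le> \<Phi> x2 * exp (- K * (x2 - y)) / 2"
    using \<open>0 \<le> K\<close> \<open>M < y\<close> \<open>0 < \<Phi> x2\<close> by (simp add: mult_left_mono)
  also have "\<dots> \<le> \<Phi> y / 2"
    using gronwall_two_sided(2)[of y x2 \<Phi> \<Phi>' K] deriv growth \<open>M < y\<close> \<open>y < x2\<close> \<open>x2 \<le> x1\<close> by simp
  also have "\<dots> \<le> N1 y"
    using comparable[of y] \<open>M < y\<close> \<open>y < x2\<close> \<open>x2 \<le> x1\<close> by simp
  finally show False
    using small N2_nonneg[of y] by linarith
qed

lemma V_deriv: "(V has_real_derivative 2 * \<omega> * x + e * Q) (at x)"
  unfolding V_def[abs_def] by (auto intro!: derivative_eq_intros simp: power2_eq_square)

lemma isCont_V: "isCont V x"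
  unfolding V_def[abs_def] by (intro continuous_intros)

(* p and q are chosen so that all terms of order 1 / (x - M) cancel; what is left stays
   bounded near the horizon. *)
lemma near_horizon_correction_deriv:
  fixes x :: real
  defines "p \<equiv> \<lambda>x. m * x * (x - M) / V x" and "q \<equiv> \<lambda>x. lam * (x - M) / V x"
    and "p' \<equiv> \<lambda>x. (m * (2 * x - M) * V x - m * x * (x - M) * (2 * \<omega> * x + e * Q)) / (V x)\<^sup>2"
    and "q' \<equiv> \<lambda>x. (lam * V x - lam * (x - M) * (2 * \<omega> * x + e * Q)) / (V x)\<^sup>2"
  assumes "M < x" "V x \<noteq> 0"
  shows "((\<lambda>x. N1 x + p x * u x - q x * v x) has_real_derivative p' x * u x - q' x * v x) (at x)"
proof -
  have "(p has_real_derivative p' x) (at x)"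
    unfolding p_def p'_def using \<open>V x \<noteq> 0\<close>
    by (auto intro!: derivative_eq_intros V_deriv simp: field_simps power2_eq_square)
  moreover have "(q has_real_derivative q' x) (at x)"
    unfolding q_def q'_def using \<open>V x \<noteq> 0\<close>
    by (auto intro!: derivative_eq_intros V_deriv simp: field_simps power2_eq_square)
  ultimately have deriv: "((\<lambda>x. N1 x + p x * u x - q x * v x) has_real_derivative
      2 * (m * x * v x + lam * u x) / (x - M)
      + (p' x * u x + 2 * (lam * N1 x - V x / (x - M) * v x) / (x - M) * p x)
      - (q' x * v x + 2 * (V x / (x - M) * u x + m * x * N1 x) / (x - M) * q x)) (at x)"
    by (intro DERIV_diff DERIV_add DERIV_mult N1_deriv u_deriv v_deriv \<open>M < x\<close>)
  have identity: "2 * (m * x * v x + lam * u x) / D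
      + (P * u x + 2 * (lam * N1 x - V x / D * v x) / D * (m * x * D / V x))
      - (R * v x + 2 * (V x / D * u x + m * x * N1 x) / D * (lam * D / V x))
      = P * u x - R * v x" if "D \<noteq> 0" for D P R
    using that \<open>V x \<noteq> 0\<close> by (simp add: field_simps)
  show ?thesis
    using deriv \<open>M < x\<close> by (simp only: identity p_def q_def)
qed

lemma near_horizon_correction_small:
  assumes "\<omega> * M + e * Q \<noteq> 0"
  obtains x1 where "M < x1"
    and "\<And>x. M \<le> x \<Longrightarrow> x \<le> x1 \<Longrightarrow>
      V x \<noteq> 0 \<and> \<bar>m * x * (x - M) / V x\<bar> < 1/4 \<and> \<bar>lam * (x - M) / V x\<bar> < 1/4"
proof -
  define p where "p x = m * x * (x - M) / V x" for x
  define q where "q x = lam * (x - M) / V x" for x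
  have "V M = M * (\<omega> * M + e * Q)"
    by (simp add: V_def power2_eq_square algebra_simps)
  then have "V M \<noteq> 0"
    using assms M_pos by simp
  then have "isCont p M" "isCont q M"
    unfolding p_def[abs_def] q_def[abs_def] by (auto intro!: continuous_intros isCont_V)
  then have "(p \<longlongrightarrow> 0) (nhds M)" "(q \<longlongrightarrow> 0) (nhds M)"
    unfolding isCont_def tendsto_at_iff_tendsto_nhds by (simp_all add: p_def q_def)
  then have "((\<lambda>x. \<bar>p x\<bar>) \<longlongrightarrow> 0) (nhds M)" "((\<lambda>x. \<bar>q x\<bar>) \<longlongrightarrow> 0) (nhds M)"
    by (simp_all add: tendsto_rabs_zero)
  moreover have "(V \<longlongrightarrow> V M) (nhds M)"
    using isCont_V by (simp add: isCont_def tendsto_at_iff_tendsto_nhds)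
  ultimately have "\<forall>\<^sub>F x in nhds M. V x \<noteq> 0 \<and> \<bar>p x\<bar> < 1/4 \<and> \<bar>q x\<bar> < 1/4"
    using \<open>V M \<noteq> 0\<close>
    by (intro eventually_conj order_tendstoD(2) tendsto_imp_eventually_ne) auto
  then obtain d where "0 < d" and small: "\<And>x. dist x M \<le> d \<Longrightarrow> V x \<noteq> 0 \<and> \<bar>p x\<bar> < 1/4 \<and> \<bar>q x\<bar> < 1/4"
    unfolding eventually_nhds_metric_le by blast
  show ?thesis
  proof (rule that[of "M + d"])
    fix x assume "M \<le> x" "x \<le> M + d"
    then show "V x \<noteq> 0 \<and> \<bar>m * x * (x - M) / V x\<bar> < 1/4 \<and> \<bar>lam * (x - M) / V x\<bar> < 1/4"
      using small[of x] by (simp add: p_def q_def dist_real_def)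
  qed (use \<open>0 < d\<close> in simp)
qed

lemma N1_vanishes_if_noncritical:
  assumes "\<omega> * M + e * Q \<noteq> 0" and "M < r"
  shows "N1 r = 0"
proof -
  define p where "p x = m * x * (x - M) / V x" for x
  define q where "q x = lam * (x - M) / V x" for x
  define p' where "p' x = (m * (2 * x - M) * V x - m * x * (x - M) * (2 * \<omega> * x + e * Q)) / (V x)\<^sup>2" for x
  define q' where "q' x = (lam * V x - lam * (x - M) * (2 * \<omega> * x + e * Q)) / (V x)\<^sup>2" for x
  obtain x1 where "M < x1" and small': "\<And>x. M \<le> x \<Longrightarrow> x \<le> x1 \<Longrightarrow> V x \<noteq> 0 \<and> \<bar>p x\<bar> < 1/4 \<and> \<bar>q x\<bar> < 1/4"
    using near_horizon_correction_small[OF assms(1)] unfolding p_def q_def by blast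
  have "continuous_on {M..x1} (\<lambda>x. \<bar>p' x\<bar> + \<bar>q' x\<bar>)"
    unfolding p'_def q'_def using small'
    by (auto intro!: continuous_intros continuous_at_imp_continuous_on isCont_V)
  then have "bounded ((\<lambda>x. \<bar>p' x\<bar> + \<bar>q' x\<bar>) ` {M..x1})"
    by (intro compact_imp_bounded compact_continuous_image compact_Icc)
  then obtain B where B: "\<And>x. x \<in> {M..x1} \<Longrightarrow> \<bar>p' x\<bar> + \<bar>q' x\<bar> \<le> B"
    unfolding bounded_real by fastforce
  show ?thesis
  proof (rule N1_vanishes_if_comparable_near_horizon
      [of x1 "\<lambda>x. N1 x + p x * u x - q x * v x" "\<lambda>x. p' x * u x - q' x * v x" "2 * B"])
    fix x assume "M < x" "x \<le> x1"
    then have small_x: "V x \<noteq> 0" "\<bar>p x\<bar> < 1/4" "\<bar>q x\<bar> < 1/4"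
      using small' by auto
    show "((\<lambda>x. N1 x + p x * u x - q x * v x) has_real_derivative p' x * u x - q' x * v x) (at x)"
      using near_horizon_correction_deriv[OF \<open>M < x\<close> \<open>V x \<noteq> 0\<close>]
      unfolding p_def[abs_def] q_def[abs_def] p'_def q'_def .
    have "\<bar>p x * u x\<bar> = \<bar>p x\<bar> * \<bar>u x\<bar>" "\<bar>q x * v x\<bar> = \<bar>q x\<bar> * \<bar>v x\<bar>"
      by (simp_all only: abs_mult)
    moreover have "\<bar>p x\<bar> * \<bar>u x\<bar> \<le> 1/4 * N1 x"
      using small_x abs_u_le[OF \<open>M < x\<close>] by (intro mult_mono) auto
    moreover have "\<bar>q x\<bar> * \<bar>v x\<bar> \<le> 1/4 * N1 x"
      using small_x abs_v_le[OF \<open>M < x\<close>] by (intro mult_mono) auto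
    ultimately have "\<bar>p x * u x\<bar> \<le> N1 x / 4" "\<bar>q x * v x\<bar> \<le> N1 x / 4"
      by simp_all
    then show comparable: "N1 x / 2 \<le> N1 x + p x * u x - q x * v x \<and> N1 x + p x * u x - q x * v x \<le> 2 * N1 x"
      using N1_nonneg[of x] unfolding abs_le_iff by linarith
    have "\<bar>p' x * u x - q' x * v x\<bar> \<le> \<bar>p' x\<bar> * N1 x + \<bar>q' x\<bar> * N1 x"
      using abs_u_le[OF \<open>M < x\<close>] abs_v_le[OF \<open>M < x\<close>]
      by (intro order.trans[OF abs_triangle_ineq4] add_mono) (auto simp: abs_mult intro: mult_left_mono)
    also have "\<dots> \<le> B * N1 x"
      using B[of x] \<open>M < x\<close> \<open>x \<le> x1\<close> by (simp flip: distrib_right add: mult_right_mono)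
    also have "\<dots> \<le> B * (2 * (N1 x + p x * u x - q x * v x))"
      using comparable B[of x] \<open>M < x\<close> \<open>x \<le> x1\<close> abs_ge_zero[of "p' x"] abs_ge_zero[of "q' x"]
      by (intro mult_left_mono) auto
    finally show "\<bar>p' x * u x - q' x * v x\<bar> \<le> 2 * B * (N1 x + p x * u x - q x * v x)"
      by (simp only: mult.assoc)
  qed (use \<open>M < x1\<close> \<open>M < r\<close> in auto)
qed

lemma radial_solution_vanishes:
  assumes "M < r"
  shows "f1 r = 0 \<and> f2 r = 0"
proof -
  have "N1 r = 0"
  proof (cases "\<omega> * M + e * Q = 0")
    case True
    then show ?thesis
      using N1_vanishes_if_critical_le N1_vanishes_if_critical_gt assms by fastforce
  next
    case False
    then show ?thesis
      using N1_vanishes_if_noncritical assms by blast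
  qed
  then show ?thesis
    using N2_eq_N1[OF assms] by (simp add: N1_def N2_def)
qed

end

theorem mainTheorem7:
  fixes M a Q m e k :: real
  assumes "a = 0" and "Q \<noteq> 0" and "M = \<bar>Q\<bar>"
    and "M\<^sup>2 = a\<^sup>2 + Q\<^sup>2"
    and "m > 0" and "half_integer k"
  shows "\<not> (\<exists>\<omega>::real. energy_eigenvalue M a Q m e k \<omega>)"
proof
  assume "\<exists>\<omega>::real. energy_eigenvalue M a Q m e k \<omega>"
  then obtain \<omega> lam f1 f2 r where radial: "radial_solution M a Q m e k \<omega> lam f1 f2"
    and "M < r" and nontrivial: "f1 r \<noteq> 0 \<or> f2 r \<noteq> 0"
    and finite_norm:
      "(\<lambda>r. ((cmod (f1 r))\<^sup>2 + (cmod (f2 r))\<^sup>2) * (r\<^sup>2 + a\<^sup>2) / (r - M)\<^sup>2) integrable_on {M<..}"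
    unfolding energy_eigenvalue_def by blast
  interpret extreme_RN_radial_solution M Q m e k \<omega> lam f1 f2
    using radial finite_norm assms by unfold_locales simp_all
  show False
    using radial_solution_vanishes[OF \<open>M < r\<close>] nontrivial by blast
qed

end
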